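(* Suppose that $(L_1,<_1),\ldots,(L_n,<_n)$ are linear orders each with at least two elements, and let $<$ be the product order on $L_1\times\cdots\times L_n$. If $\prec_1,\ldots,\prec_n$ are linear orders on $L_1\times\cdots\times L_n$ which realize $<$ (i.e. $<\;=\;\prec_1\cap\cdots\cap\prec_n$), then there is a permutation $\sigma\in S_n$ such that for all $i\leq n$ and all $\mathbf{a},\mathbf{b}\in L_1\times\cdots\times L_n$, $a_i<_ib_i$ implies $\mathbf{a}\prec_{\sigma(i)}\mathbf{b}$.
   Context: The product order: $\mathbf{a}<\mathbf{b}$ iff $a_i\leq_i b_i$ for all $i$ and $\mathbf{a}\neq\mathbf{b}$. $S_n$ is the group of permutations of $\{1,\ldots,n\}$. *)

theory Defs
  imports "HOL-Combinatorics.Permutations" "HOL-Library.FuncSet"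
begin

definition strict_linear_on :: "'a set \<Rightarrow> ('a \<Rightarrow> 'a \<Rightarrow> bool) \<Rightarrow> bool" where
  "strict_linear_on A r \<longleftrightarrow>
     (\<forall>x\<in>A. \<not> r x x) \<and>
     (\<forall>x\<in>A. \<forall>y\<in>A. \<forall>z\<in>A. r x y \<longrightarrow> r y z \<longrightarrow> r x z) \<and>
     (\<forall>x\<in>A. \<forall>y\<in>A. x \<noteq> y \<longrightarrow> r x y \<or> r y x)"

text \<open>Product L_0 x ... x L_(n-1), tuples as extensional functions on {0..<n}.\<close>
definition prod_carrier :: "nat \<Rightarrow> (nat \<Rightarrow> 'a set) \<Rightarrow> (nat \<Rightarrow> 'a) set" where
  "prod_carrier n L = PiE {0..<n} L"

definition prod_less :: "nat \<Rightarrow> (nat \<Rightarrow> 'a \<Rightarrow> 'a \<Rightarrow> bool) \<Rightarrow> (nat \<Rightarrow> 'a) \<Rightarrow> (nat \<Rightarrow> 'a) \<Rightarrow> bool" where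
  "prod_less n lt a b \<longleftrightarrow> (\<forall>i<n. lt i (a i) (b i) \<or> a i = b i) \<and> a \<noteq> b"

end

theory Submission
  imports Defs
begin

(*
  Fix c, d with c_k < d_k in every coordinate, and compare B_k = d(k := c_k) with
  A_k = c(k := d_k). Since A_k is not below B_k in the product order, some \<prec>_j puts
  B_k below A_k, i.e. follows coordinate k on this pair. No \<prec>_j follows two coordinates
  k \<noteq> k': from A_k \<le> B_k' and A_k' \<le> B_k we would get the cycle
  B_k \<prec>_j A_k \<preceq>_j B_k' \<prec>_j A_k' \<preceq>_j B_k. By pigeonhole, "\<prec>_j follows k" is the graph
  of a permutation \<sigma> of the coordinates.

  Widening the pair (lowering c, raising d) does not change \<sigma>: at a coordinate k
  where c and d are unchanged, B_k can only go up and A_k only down, so \<prec>_(\<sigma> k) still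
  follows k; if only one coordinate is widened, \<sigma> agrees there as well, being a
  bijection. Any two pairs have a common widening, so \<sigma> does not depend on (c, d).
  Finally, given a_i < b_i, take the pair with c_i = a_i, d_i = b_i and the other
  coordinates widened until a \<le> B_i and A_i \<le> b; with j = \<sigma> i this gives
  a \<preceq>_j B_i \<prec>_j A_i \<preceq>_j b.
*)

lemma permutes_eq_at_if_eq_off:
  assumes f: "f permutes S" and g: "g permutes S"
    and eq: "\<And>k. k \<in> S \<Longrightarrow> k \<noteq> m \<Longrightarrow> f k = g k"
  shows "f m = g m"
proof (cases "m \<in> S")
  case True
  then obtain k where "k \<in> S" "g k = f m"
    using permutes_image[OF g] permutes_in_image[OF f] by (metis imageE)
  then show ?thesis
    using eq permutes_inj[OF f] by (metis injD)
qed (simp add: permutes_not_in[OF f] permutes_not_in[OF g])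

lemma permutes_if_left_total_right_unique:
  assumes "finite S"
    and total: "\<And>k. k \<in> S \<Longrightarrow> \<exists>j\<in>S. R k j"
    and unique: "\<And>k k' j. k \<in> S \<Longrightarrow> k' \<in> S \<Longrightarrow> j \<in> S \<Longrightarrow> R k j \<Longrightarrow> R k' j \<Longrightarrow> k = k'"
  shows "\<exists>f. f permutes S \<and> (\<forall>k\<in>S. \<forall>j\<in>S. R k j \<longleftrightarrow> f k = j)"
proof -
  define f where "f k = (if k \<in> S then SOME j. j \<in> S \<and> R k j else k)" for k
  have f: "f k \<in> S" "R k (f k)" if "k \<in> S" for k
    using someI_ex[OF total[OF that, unfolded Bex_def]] that by (simp_all add: f_def)
  have inj: "inj_on f S"
  proof (rule inj_onI)
    fix k k' assume "k \<in> S" "k' \<in> S" "f k = f k'"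
    then show "k = k'"
      using unique[OF \<open>k \<in> S\<close> \<open>k' \<in> S\<close> f(1)[OF \<open>k \<in> S\<close>]] f(2) by metis
  qed
  have "f ` S \<subseteq> S"
    using f(1) by blast
  then have img: "f ` S = S"
    by (rule endo_inj_surj[OF \<open>finite S\<close> _ inj])
  have perm: "f permutes S"
  proof (rule bij_imp_permutes)
    show "bij_betw f S S"
      using inj img by (simp add: bij_betw_def)
    show "f k = k" if "k \<notin> S" for k
      using that by (simp add: f_def)
  qed
  show ?thesis
  proof (intro exI conjI ballI)
    show "f permutes S"
      by (rule perm)
    fix k j assume "k \<in> S" "j \<in> S"
    show "R k j \<longleftrightarrow> f k = j"
    proof
      assume "R k j"
      obtain k' where "k' \<in> S" "f k' = j"
        using \<open>j \<in> S\<close> img by (metis imageE)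
      then show "f k = j"
        using unique[OF \<open>k' \<in> S\<close> \<open>k \<in> S\<close> \<open>j \<in> S\<close>] f(2) \<open>R k j\<close> by metis
    next
      assume "f k = j"
      then show "R k j"
        using f(2)[OF \<open>k \<in> S\<close>] by simp
    qed
  qed
qed

definition prod_le :: "nat \<Rightarrow> (nat \<Rightarrow> 'a \<Rightarrow> 'a \<Rightarrow> bool) \<Rightarrow> (nat \<Rightarrow> 'a) \<Rightarrow> (nat \<Rightarrow> 'a) \<Rightarrow> bool" where
  "prod_le n lt a b \<longleftrightarrow> (\<forall>i<n. lt i (a i) (b i) \<or> a i = b i)"

lemma prod_less_iff_prod_le: "prod_less n lt a b \<longleftrightarrow> prod_le n lt a b \<and> a \<noteq> b"
  by (simp add: prod_less_def prod_le_def)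

locale product_realizer =
  fixes n :: nat
    and L :: "nat \<Rightarrow> 'a set"
    and lt :: "nat \<Rightarrow> 'a \<Rightarrow> 'a \<Rightarrow> bool"
    and prec :: "nat \<Rightarrow> (nat \<Rightarrow> 'a) \<Rightarrow> (nat \<Rightarrow> 'a) \<Rightarrow> bool"
  assumes lin: "\<And>i. i < n \<Longrightarrow> strict_linear_on (L i) (lt i)"
    and prec_lin: "\<And>j. j < n \<Longrightarrow> strict_linear_on (prod_carrier n L) (prec j)"
    and realize: "\<And>a b. a \<in> prod_carrier n L \<Longrightarrow> b \<in> prod_carrier n L \<Longrightarrow>
                    prod_less n lt a b \<longleftrightarrow> (\<forall>j<n. prec j a b)"
begin

abbreviation C :: "(nat \<Rightarrow> 'a) set" where "C \<equiv> prod_carrier n L"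

lemma lt_irrefl: "i < n \<Longrightarrow> x \<in> L i \<Longrightarrow> \<not> lt i x x"
  using lin[of i] unfolding strict_linear_on_def by blast

lemma lt_trans: "i < n \<Longrightarrow> x \<in> L i \<Longrightarrow> y \<in> L i \<Longrightarrow> z \<in> L i \<Longrightarrow> lt i x y \<Longrightarrow> lt i y z \<Longrightarrow> lt i x z"
  using lin[of i] unfolding strict_linear_on_def by blast

lemma lt_total: "i < n \<Longrightarrow> x \<in> L i \<Longrightarrow> y \<in> L i \<Longrightarrow> x \<noteq> y \<Longrightarrow> lt i x y \<or> lt i y x"
  using lin[of i] unfolding strict_linear_on_def by blast

lemma prec_irrefl: "j < n \<Longrightarrow> x \<in> C \<Longrightarrow> \<not> prec j x x"
  using prec_lin[of j] unfolding strict_linear_on_def by blast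

lemma prec_trans: "j < n \<Longrightarrow> x \<in> C \<Longrightarrow> y \<in> C \<Longrightarrow> z \<in> C \<Longrightarrow> prec j x y \<Longrightarrow> prec j y z \<Longrightarrow> prec j x z"
  using prec_lin[of j] unfolding strict_linear_on_def by blast

lemma prec_total: "j < n \<Longrightarrow> x \<in> C \<Longrightarrow> y \<in> C \<Longrightarrow> x \<noteq> y \<Longrightarrow> prec j x y \<or> prec j y x"
  using prec_lin[of j] unfolding strict_linear_on_def by blast

lemma carrier_coord: "x \<in> C \<Longrightarrow> i < n \<Longrightarrow> x i \<in> L i"
  by (auto simp: prod_carrier_def)

lemma carrier_fun_upd: "x \<in> C \<Longrightarrow> y \<in> C \<Longrightarrow> k < n \<Longrightarrow> x(k := y k) \<in> C"
  by (auto simp: prod_carrier_def PiE_iff extensional_def)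

lemma prod_le_prec_prod_le:
  assumes j: "j < n" and C: "x \<in> C" "y \<in> C" "z \<in> C" "w \<in> C"
    and "prod_le n lt x y" "prec j y z" "prod_le n lt z w"
  shows "prec j x w"
proof -
  have prec_or_eq: "prec j u v \<or> u = v" if "u \<in> C" "v \<in> C" "prod_le n lt u v" for u v
    using realize[OF that(1,2)] that(3) j by (auto simp: prod_less_iff_prod_le)
  have "prec j x z"
    using prec_or_eq[OF C(1,2) \<open>prod_le n lt x y\<close>] prec_trans[OF j C(1-3)] \<open>prec j y z\<close> by blast
  then show ?thesis
    using prec_or_eq[OF C(3,4) \<open>prod_le n lt z w\<close>] prec_trans[OF j C(1,3,4)] by blast
qed

definition coordwise_less :: "(nat \<Rightarrow> 'a) \<Rightarrow> (nat \<Rightarrow> 'a) \<Rightarrow> bool" where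
  "coordwise_less c d \<longleftrightarrow> c \<in> C \<and> d \<in> C \<and> (\<forall>k<n. lt k (c k) (d k))"

lemma coordwise_less_fun_upd:
  assumes "coordwise_less c d" "a \<in> C" "b \<in> C" "i < n" "lt i (a i) (b i)"
  shows "coordwise_less (c(i := a i)) (d(i := b i))"
  using assms carrier_fun_upd by (auto simp: coordwise_less_def)

lemma coordwise_less_widen:
  assumes cd: "coordwise_less c d" and "c' \<in> C" "d' \<in> C" "prod_le n lt c' c" "prod_le n lt d d'"
  shows "coordwise_less c' d'"
  unfolding coordwise_less_def
proof (intro conjI allI impI)
  fix k assume k: "k < n"
  have "c k \<in> L k" "d k \<in> L k" "c' k \<in> L k" "d' k \<in> L k" "lt k (c k) (d k)"
    using cd assms(2,3) k carrier_coord by (auto simp: coordwise_less_def)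
  then show "lt k (c' k) (d' k)"
    using assms(4,5) k lt_trans[OF k] by (metis prod_le_def)
qed (use assms in auto)

lemma coordwise_less_exists:
  assumes two: "\<And>i. i < n \<Longrightarrow> \<exists>x\<in>L i. \<exists>y\<in>L i. x \<noteq> y"
  shows "\<exists>c d. coordwise_less c d"
proof -
  have "\<exists>p. fst p \<in> L i \<and> snd p \<in> L i \<and> lt i (fst p) (snd p)" if i: "i < n" for i
  proof -
    obtain x y where "x \<in> L i" "y \<in> L i" "x \<noteq> y"
      using two[OF i] by blast
    then consider "lt i x y" | "lt i y x"
      using lt_total[OF i] by blast
    then show ?thesis
      using \<open>x \<in> L i\<close> \<open>y \<in> L i\<close> by cases (rule exI[of _ "(x, y)"], simp, rule exI[of _ "(y, x)"], simp)
  qed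
  then obtain p where p: "\<And>i. i < n \<Longrightarrow> fst (p i) \<in> L i \<and> snd (p i) \<in> L i \<and> lt i (fst (p i)) (snd (p i))"
    using choice[of "\<lambda>i p. i < n \<longrightarrow> fst p \<in> L i \<and> snd p \<in> L i \<and> lt i (fst p) (snd p)"] by blast
  then have "coordwise_less (restrict (fst \<circ> p) {0..<n}) (restrict (snd \<circ> p) {0..<n})"
    by (auto simp: coordwise_less_def prod_carrier_def)
  then show ?thesis
    by blast
qed

definition follows :: "(nat \<Rightarrow> 'a) \<Rightarrow> (nat \<Rightarrow> 'a) \<Rightarrow> nat \<Rightarrow> nat \<Rightarrow> bool" where
  "follows c d k j \<longleftrightarrow> prec j (d(k := c k)) (c(k := d k))"

lemma follows_exists:
  assumes cd: "coordwise_less c d" and k: "k < n"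
  shows "\<exists>j<n. follows c d k j"
proof -
  let ?B = "d(k := c k)" and ?A = "c(k := d k)"
  have in_C: "?A \<in> C" "?B \<in> C"
    using cd k carrier_fun_upd by (auto simp: coordwise_less_def)
  have ck: "c k \<in> L k" "d k \<in> L k" "lt k (c k) (d k)"
    using cd k carrier_coord by (auto simp: coordwise_less_def)
  have "?A \<noteq> ?B"
  proof
    assume "?A = ?B"
    then have "d k = c k"
      by (metis fun_upd_same)
    then show False
      using ck lt_irrefl[OF k] by simp
  qed
  moreover have "\<not> prod_le n lt ?A ?B"
  proof
    assume "prod_le n lt ?A ?B"
    then have "lt k (d k) (c k) \<or> d k = c k"
      using k unfolding prod_le_def by (metis fun_upd_same)
    then show False
      using lt_trans[OF k ck(1,2,1) ck(3)] lt_irrefl[OF k ck(1)] ck(3) by auto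
  qed
  ultimately obtain j where "j < n" "\<not> prec j ?A ?B"
    using realize[OF in_C] by (auto simp: prod_less_iff_prod_le)
  then have "prec j ?B ?A"
    using prec_total[OF _ in_C] \<open>?A \<noteq> ?B\<close> by blast
  then show ?thesis
    using \<open>j < n\<close> by (auto simp: follows_def)
qed

lemma follows_unique_coord:
  assumes cd: "coordwise_less c d" and "k < n" "k' < n" "j < n"
    and "follows c d k j" "follows c d k' j"
  shows "k = k'"
proof (rule ccontr)
  assume "k \<noteq> k'"
  let ?B = "\<lambda>k. d(k := c k)" and ?A = "\<lambda>k. c(k := d k)"
  have in_C: "?A k \<in> C" "?B k \<in> C" "?A k' \<in> C" "?B k' \<in> C"
    using cd assms carrier_fun_upd by (auto simp: coordwise_less_def)
  have "prod_le n lt (?A k) (?B k')" "prod_le n lt (?A k') (?B k)"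
    using cd \<open>k \<noteq> k'\<close> by (auto simp: prod_le_def coordwise_less_def)
  then have "prec j (?A k) (?B k)"
    using prod_le_prec_prod_le[OF \<open>j < n\<close> in_C(1,4,3,2)] \<open>follows c d k' j\<close> by (simp add: follows_def)
  then have "prec j (?B k) (?B k)"
    using prec_trans[OF \<open>j < n\<close> in_C(2,1,2)] \<open>follows c d k j\<close> by (simp add: follows_def)
  then show False
    using prec_irrefl[OF \<open>j < n\<close> in_C(2)] by contradiction
qed

definition coord_perm :: "(nat \<Rightarrow> 'a) \<Rightarrow> (nat \<Rightarrow> 'a) \<Rightarrow> nat \<Rightarrow> nat" where
  "coord_perm c d = (SOME f. f permutes {0..<n} \<and>
     (\<forall>k\<in>{0..<n}. \<forall>j\<in>{0..<n}. follows c d k j \<longleftrightarrow> f k = j))"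

lemma coord_perm:
  assumes "coordwise_less c d"
  shows coord_perm_permutes: "coord_perm c d permutes {0..<n}"
    and follows_iff_coord_perm: "k < n \<Longrightarrow> j < n \<Longrightarrow> follows c d k j \<longleftrightarrow> coord_perm c d k = j"
proof -
  have "\<exists>f. f permutes {0..<n} \<and> (\<forall>k\<in>{0..<n}. \<forall>j\<in>{0..<n}. follows c d k j \<longleftrightarrow> f k = j)"
    using follows_exists[OF assms] follows_unique_coord[OF assms]
    by (intro permutes_if_left_total_right_unique) fastforce+
  from someI_ex[OF this, folded coord_perm_def]
  show "coord_perm c d permutes {0..<n}" "k < n \<Longrightarrow> j < n \<Longrightarrow> follows c d k j \<longleftrightarrow> coord_perm c d k = j"
    by auto
qed

lemma coord_perm_less: "coordwise_less c d \<Longrightarrow> k < n \<Longrightarrow> coord_perm c d k < n"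
  using permutes_in_image[OF coord_perm_permutes] by fastforce

lemma coord_perm_eq_at_if_widened:
  assumes cd: "coordwise_less c d" and cd': "coordwise_less c' d'" and k: "k < n"
    and "prod_le n lt c' c" "prod_le n lt d d'" "c' k = c k" "d' k = d k"
  shows "coord_perm c' d' k = coord_perm c d k"
proof -
  define j where "j = coord_perm c' d' k"
  have j: "j < n" "follows c' d' k j"
    using coord_perm_less[OF cd' k] follows_iff_coord_perm[OF cd' k] by (auto simp: j_def)
  have in_C: "d(k := c k) \<in> C" "d'(k := c' k) \<in> C" "c'(k := d' k) \<in> C" "c(k := d k) \<in> C"
    using cd cd' k carrier_fun_upd by (auto simp: coordwise_less_def)
  have "prod_le n lt (d(k := c k)) (d'(k := c' k))" "prod_le n lt (c'(k := d' k)) (c(k := d k))"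
    using assms(4-7) by (auto simp: prod_le_def)
  then have "follows c d k j"
    using prod_le_prec_prod_le[OF j(1) in_C] j(2) by (simp add: follows_def)
  then show ?thesis
    using follows_iff_coord_perm[OF cd k j(1)] by (simp add: j_def)
qed

lemma coord_perm_eq_if_widened_at_one_coord:
  assumes cd: "coordwise_less c d" and cd': "coordwise_less c' d'"
    and "prod_le n lt c' c" "prod_le n lt d d'"
    and off_m: "\<And>k. k < n \<Longrightarrow> k \<noteq> m \<Longrightarrow> c' k = c k \<and> d' k = d k"
  shows "coord_perm c' d' = coord_perm c d"
proof -
  have off: "coord_perm c' d' k = coord_perm c d k" if "k \<in> {0..<n}" "k \<noteq> m" for k
    using coord_perm_eq_at_if_widened[OF cd cd'] assms(3,4) off_m that by simp
  show ?thesis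
  proof
    fix k
    show "coord_perm c' d' k = coord_perm c d k"
    proof (cases "k = m")
      case True
      then show ?thesis
        using permutes_eq_at_if_eq_off[OF coord_perm_permutes[OF cd'] coord_perm_permutes[OF cd] off]
        by simp
    next
      case False
      then show ?thesis
        using off permutes_not_in[OF coord_perm_permutes[OF cd]] permutes_not_in[OF coord_perm_permutes[OF cd']]
        by (cases "k < n") auto
    qed
  qed
qed

lemma coord_perm_eq_if_widened:
  assumes cd: "coordwise_less c d" and cd': "coordwise_less c' d'"
    and "prod_le n lt c' c" "prod_le n lt d d'"
  shows "coord_perm c' d' = coord_perm c d"
proof
  fix i
  show "coord_perm c' d' i = coord_perm c d i"
  proof (cases "i < n")
    case True
    have cd_i: "lt i (c i) (d i)" "c \<in> C" "d \<in> C"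
      using cd True by (auto simp: coordwise_less_def)
    let ?c = "c'(i := c i)" and ?d = "d'(i := d i)"
    have mid: "coordwise_less ?c ?d"
      using coordwise_less_fun_upd[OF cd' cd_i(2,3) True cd_i(1)] .
    have "coord_perm ?c ?d i = coord_perm c d i"
      using coord_perm_eq_at_if_widened[OF cd mid True] assms(3,4) by (auto simp: prod_le_def)
    moreover have "coord_perm c' d' = coord_perm ?c ?d"
      using coord_perm_eq_if_widened_at_one_coord[OF mid cd', of i] assms(3,4) True
      by (auto simp: prod_le_def)
    ultimately show ?thesis
      by simp
  next
    case False
    then show ?thesis
      by (simp add: permutes_not_in[OF coord_perm_permutes[OF cd]] permutes_not_in[OF coord_perm_permutes[OF cd']])
  qed
qed

lemma coord_le_if_not_less: "i < n \<Longrightarrow> x \<in> C \<Longrightarrow> y \<in> C \<Longrightarrow> \<not> lt i (x i) (y i) \<Longrightarrow> lt i (y i) (x i) \<or> y i = x i"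
  using lt_total carrier_coord by metis

definition coord_min :: "(nat \<Rightarrow> 'a) \<Rightarrow> (nat \<Rightarrow> 'a) \<Rightarrow> nat \<Rightarrow> 'a" where
  "coord_min x y = restrict (\<lambda>i. if lt i (x i) (y i) then x i else y i) {0..<n}"

definition coord_max :: "(nat \<Rightarrow> 'a) \<Rightarrow> (nat \<Rightarrow> 'a) \<Rightarrow> nat \<Rightarrow> 'a" where
  "coord_max x y = restrict (\<lambda>i. if lt i (x i) (y i) then y i else x i) {0..<n}"

lemma coord_min:
  assumes "x \<in> C" "y \<in> C"
  shows coord_min_in_carrier: "coord_min x y \<in> C"
    and coord_min_le_left: "prod_le n lt (coord_min x y) x"
    and coord_min_le_right: "prod_le n lt (coord_min x y) y"
proof -
  show "coord_min x y \<in> C"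
    using assms by (auto simp: coord_min_def prod_carrier_def PiE_iff)
qed (use assms coord_le_if_not_less in \<open>auto simp: coord_min_def prod_le_def\<close>)

lemma coord_max:
  assumes "x \<in> C" "y \<in> C"
  shows coord_max_in_carrier: "coord_max x y \<in> C"
    and coord_max_ge_left: "prod_le n lt x (coord_max x y)"
    and coord_max_ge_right: "prod_le n lt y (coord_max x y)"
proof -
  show "coord_max x y \<in> C"
    using assms by (auto simp: coord_max_def prod_carrier_def PiE_iff)
qed (use assms coord_le_if_not_less in \<open>auto simp: coord_max_def prod_le_def\<close>)

lemma coord_perm_independent:
  assumes cd: "coordwise_less c d" and cd': "coordwise_less c' d'"
  shows "coord_perm c d = coord_perm c' d'"
proof -
  have C: "c \<in> C" "d \<in> C" "c' \<in> C" "d' \<in> C"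
    using cd cd' by (auto simp: coordwise_less_def)
  let ?c = "coord_min c c'" and ?d = "coord_max d d'"
  have mid: "coordwise_less ?c ?d"
    using coordwise_less_widen[OF cd coord_min_in_carrier[OF C(1,3)] coord_max_in_carrier[OF C(2,4)]
        coord_min_le_left[OF C(1,3)] coord_max_ge_left[OF C(2,4)]] .
  have "coord_perm ?c ?d = coord_perm c d"
    using coord_perm_eq_if_widened[OF cd mid coord_min_le_left[OF C(1,3)] coord_max_ge_left[OF C(2,4)]] .
  moreover have "coord_perm ?c ?d = coord_perm c' d'"
    using coord_perm_eq_if_widened[OF cd' mid coord_min_le_right[OF C(1,3)] coord_max_ge_right[OF C(2,4)]] .
  ultimately show ?thesis
    by simp
qed

lemma prec_coord_perm:
  assumes cd: "coordwise_less c d" and i: "i < n" and a: "a \<in> C" and b: "b \<in> C"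
    and ab: "lt i (a i) (b i)"
  shows "prec (coord_perm c d i) a b"
proof -
  have C: "c \<in> C" "d \<in> C"
    using cd by (auto simp: coordwise_less_def)
  let ?c = "(coord_min c b)(i := a i)" and ?d = "(coord_max d a)(i := b i)"
  have "coordwise_less (coord_min c b) (coord_max d a)"
    using coordwise_less_widen[OF cd coord_min_in_carrier[OF C(1) b] coord_max_in_carrier[OF C(2) a]
        coord_min_le_left[OF C(1) b] coord_max_ge_left[OF C(2) a]] .
  then have cd': "coordwise_less ?c ?d"
    using coordwise_less_fun_upd[OF _ a b i ab] by blast
  define j where "j = coord_perm c d i"
  have "j < n" "follows ?c ?d i j"
    using coord_perm_less[OF cd i] follows_iff_coord_perm[OF cd' i]
      coord_perm_independent[OF cd cd'] by (auto simp: j_def)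
  then have "prec j ((coord_max d a)(i := a i)) ((coord_min c b)(i := b i))"
    by (simp add: follows_def)
  moreover have "prod_le n lt a ((coord_max d a)(i := a i))" "prod_le n lt ((coord_min c b)(i := b i)) b"
    using coord_max_ge_right[OF C(2) a] coord_min_le_right[OF C(1) b] by (auto simp: prod_le_def)
  ultimately have "prec j a b"
    using prod_le_prec_prod_le[OF \<open>j < n\<close> a _ _ b]
      carrier_fun_upd[OF coord_max_in_carrier[OF C(2) a] a i]
      carrier_fun_upd[OF coord_min_in_carrier[OF C(1) b] b i] by blast
  then show ?thesis
    by (simp add: j_def)
qed

end

theorem lemma6p3:
  fixes n :: nat
    and L :: "nat \<Rightarrow> 'a set"
    and lt :: "nat \<Rightarrow> 'a \<Rightarrow> 'a \<Rightarrow> bool"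
    and prec :: "nat \<Rightarrow> (nat \<Rightarrow> 'a) \<Rightarrow> (nat \<Rightarrow> 'a) \<Rightarrow> bool"
  assumes lin: "\<And>i. i < n \<Longrightarrow> strict_linear_on (L i) (lt i)"
    and two: "\<And>i. i < n \<Longrightarrow> \<exists>x\<in>L i. \<exists>y\<in>L i. x \<noteq> y"
    and prec_lin: "\<And>j. j < n \<Longrightarrow> strict_linear_on (prod_carrier n L) (prec j)"
    and realize: "\<And>a b. a \<in> prod_carrier n L \<Longrightarrow> b \<in> prod_carrier n L \<Longrightarrow>
                    prod_less n lt a b \<longleftrightarrow> (\<forall>j<n. prec j a b)"
  shows "\<exists>\<sigma>. \<sigma> permutes {0..<n} \<and>
           (\<forall>i<n. \<forall>a\<in>prod_carrier n L. \<forall>b\<in>prod_carrier n L.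
              lt i (a i) (b i) \<longrightarrow> prec (\<sigma> i) a b)"
proof -
  interpret product_realizer n L lt prec
    using lin prec_lin realize by unfold_locales
  obtain c d where cd: "coordwise_less c d"
    using coordwise_less_exists[OF two] by blast
  show ?thesis
    using coord_perm_permutes[OF cd] prec_coord_perm[OF cd] by blast
qed

end
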